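(* Let $a\ge1$, let $\mathcal{P}$ be either $\mathcal{Q}_{a,a}$ or $\mathcal{U}_a$, and let $\nu$ be any permutation of $[a]$. Define $\mathcal{R}(I)=\sum_{(i,j)\in I}(-1)^{i+j}$ for $I\in J(\mathcal{P})$. Then $\mathcal{R}$ is homomesic for $\mathcal{T}_\nu$ acting on $J(\mathcal{P})$.
   Context: $J(P)$ is the set of order ideals of a finite poset $P$. Toggle: $\sigma_x(I)=I\cup\{x\}$ if $x\notin I$ and $I\cup\{x\}\in J(P)$; $I\setminus\{x\}$ if $x\in I$ and $I\setminus\{x\}\in J(P)$; $I$ otherwise. For a chain $C=\{x_1<\dots<x_m\}$, $\sigma_C=\sigma_{x_1}\circ\cdots\circ\sigma_{x_m}$. $\mathcal{Q}_{a,a}=[a]\times[a]$ with componentwise order and columns $C_c=\{(c,j):j\in[a]\}$; $\mathcal{U}_a=\{(i,j)\in[a]^2: i+j\ge a+1\}$ with componentwise order and columns $C_c=\{(c,j): a+1-c\le j\le a\}$. Comotion: $\mathcal{T}_\nu=\sigma_{C_{\nu(a)}}\circ\cdots\circ\sigma_{C_{\nu(1)}}$. A function on a finite set with a permutation $\tau$ is homomesic if its average over every $\tau$-orbit is the same constant. *)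

theory Defs
  imports Complex_Main "HOL-Combinatorics.Permutations"
begin

definition cw_le :: "nat \<times> nat \<Rightarrow> nat \<times> nat \<Rightarrow> bool" where
  "cw_le x y \<longleftrightarrow> fst x \<le> fst y \<and> snd x \<le> snd y"

definition is_order_ideal :: "(nat \<times> nat) set \<Rightarrow> (nat \<times> nat) set \<Rightarrow> bool" where
  "is_order_ideal P I \<longleftrightarrow> I \<subseteq> P \<and> (\<forall>x\<in>I. \<forall>y\<in>P. cw_le y x \<longrightarrow> y \<in> I)"

definition ideals :: "(nat \<times> nat) set \<Rightarrow> (nat \<times> nat) set set" where
  "ideals P = {I. is_order_ideal P I}"

definition toggle :: "(nat \<times> nat) set \<Rightarrow> nat \<times> nat \<Rightarrow> (nat \<times> nat) set \<Rightarrow> (nat \<times> nat) set" where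
  "toggle P x I =
     (if x \<notin> I \<and> is_order_ideal P (insert x I) then insert x I
      else if x \<in> I \<and> is_order_ideal P (I - {x}) then I - {x}
      else I)"

(* sigma_C for a chain given as the list [x_1, ..., x_m] with x_1 < ... < x_m:
   sigma_{x_1} o ... o sigma_{x_m} *)
definition chain_toggle :: "(nat \<times> nat) set \<Rightarrow> (nat \<times> nat) list \<Rightarrow> (nat \<times> nat) set \<Rightarrow> (nat \<times> nat) set" where
  "chain_toggle P xs = foldr (toggle P) xs"

definition Qaa :: "nat \<Rightarrow> (nat \<times> nat) set" where
  "Qaa a = {(i, j). i \<in> {1..a} \<and> j \<in> {1..a}}"

definition Ua :: "nat \<Rightarrow> (nat \<times> nat) set" where
  "Ua a = {(i, j). i \<in> {1..a} \<and> j \<in> {1..a} \<and> i + j \<ge> a + 1}"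

definition colQ :: "nat \<Rightarrow> nat \<Rightarrow> (nat \<times> nat) list" where
  "colQ a c = map (\<lambda>j. (c, j)) [1..<a+1]"

definition colU :: "nat \<Rightarrow> nat \<Rightarrow> (nat \<times> nat) list" where
  "colU a c = map (\<lambda>j. (c, j)) [a+1-c..<a+1]"

(* Comotion T_nu = sigma_{C_nu(a)} o ... o sigma_{C_nu(1)}  (C_nu(1) applied first) *)
definition comotion :: "(nat \<times> nat) set \<Rightarrow> (nat \<Rightarrow> (nat \<times> nat) list) \<Rightarrow> nat \<Rightarrow> (nat \<Rightarrow> nat)
    \<Rightarrow> (nat \<times> nat) set \<Rightarrow> (nat \<times> nat) set" where
  "comotion P col a \<nu> = fold (\<lambda>k. chain_toggle P (col (\<nu> k))) [1..<a+1]"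

definition orbit_of :: "('a \<Rightarrow> 'a) \<Rightarrow> 'a \<Rightarrow> 'a set" where
  "orbit_of \<tau> x = {(\<tau> ^^ n) x | n. True}"

definition homomesic :: "'a set \<Rightarrow> ('a \<Rightarrow> 'a) \<Rightarrow> ('a \<Rightarrow> real) \<Rightarrow> bool" where
  "homomesic S \<tau> f \<longleftrightarrow> finite S \<and> bij_betw \<tau> S S \<and>
     (\<exists>c. \<forall>x\<in>S. (\<Sum>y\<in>orbit_of \<tau> x. f y) / real (card (orbit_of \<tau> x)) = c)"

definition Rstat :: "(nat \<times> nat) set \<Rightarrow> real" where
  "Rstat I = (\<Sum>(i, j)\<in>I. (-1) ^ (i + j))"

end

theory Submission
  imports Defs "HOL-Combinatorics.Cycles"
begin

(*
  An order ideal of either poset is determined by the heights of its columns, and toggling a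
  whole column changes only that column's height, by a rule that depends on the heights of its
  two neighbours. Shifting
  column c of a comotion orbit forward in time by the number of descents of the inverse
  permutation to the left of c turns every pair of consecutive states into a pair related by
  promotion, the comotion that toggles the columns from left to right. The statistic R is a sum
  over columns, so the shift does not change its sum over an orbit. For a pair related by
  promotion, the two values of R add up to a constant depending only on the poset (the parity
  of a for the square, (-1)^(a+1) a for the staircase); hence every orbit average of R is half
  of that constant.
*)

section \<open>Toggles and homomesy\<close>

lemma finite_ideals: "finite P \<Longrightarrow> finite (ideals P)"
  by (rule finite_subset[of _ "Pow P"]) (auto simp: ideals_def is_order_ideal_def)

lemma not_is_order_ideal:
  assumes "x \<in> I" "y \<in> P" "cw_le y x" "y \<notin> I"
  shows "\<not> is_order_ideal P I"
  using assms unfolding is_order_ideal_def by blast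

lemma is_order_ideal_toggle: "is_order_ideal P I \<Longrightarrow> is_order_ideal P (toggle P x I)"
  unfolding toggle_def by simp

lemma toggle_toggle: "is_order_ideal P I \<Longrightarrow> toggle P x (toggle P x I) = I"
  unfolding toggle_def by (cases "x \<in> I") (simp_all add: insert_absorb)

lemma bij_betw_toggle: "bij_betw (toggle P x) (ideals P) (ideals P)"
  by (rule bij_betw_byWitness[where f' = "toggle P x"])
    (auto simp: ideals_def is_order_ideal_toggle toggle_toggle)

lemma bij_betw_chain_toggle: "bij_betw (chain_toggle P xs) (ideals P) (ideals P)"
  unfolding chain_toggle_def
proof (induction xs)
  case (Cons x xs)
  show ?case using bij_betw_trans[OF Cons.IH bij_betw_toggle] by (simp add: comp_def)
qed (simp add: id_def[symmetric])

lemma bij_betw_comotion: "bij_betw (comotion P col a \<nu>) (ideals P) (ideals P)"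
proof -
  have "bij_betw (fold (\<lambda>k. chain_toggle P (col (\<nu> k))) ks) (ideals P) (ideals P)" for ks
  proof (induction ks)
    case (Cons k ks)
    show ?case using bij_betw_trans[OF bij_betw_chain_toggle Cons.IH] by (simp add: comp_def)
  qed (simp add: id_def[symmetric])
  then show ?thesis unfolding comotion_def .
qed

lemma funpow_in: "T ` S \<subseteq> S \<Longrightarrow> x \<in> S \<Longrightarrow> (T ^^ n) x \<in> S"
  by (induction n) auto

lemma funpow_cancel_inj_on:
  assumes "T ` S \<subseteq> S" "inj_on T S" "x \<in> S" "(T ^^ i) x = (T ^^ (i + d)) x"
  shows "(T ^^ d) x = x"
  using assms(4)
proof (induction i)
  case (Suc i)
  have "(T ^^ i) x \<in> S" "(T ^^ (i + d)) x \<in> S"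
    by (rule funpow_in[OF assms(1,3)])+
  moreover have "T ((T ^^ i) x) = T ((T ^^ (i + d)) x)"
    using Suc.prems by simp
  ultimately show ?case
    using Suc.IH inj_onD[OF assms(2)] by blast
qed simp

lemma bij_betw_periodic_point:
  assumes "finite S" "bij_betw T S S" "x \<in> S"
  shows "\<exists>n>0. (T ^^ n) x = x"
proof -
  have into: "T ` S \<subseteq> S" and inj: "inj_on T S"
    using assms(2) by (auto simp: bij_betw_def)
  have "range (\<lambda>n. (T ^^ n) x) \<subseteq> S"
    using funpow_in[OF into assms(3)] by blast
  then have "\<not> inj (\<lambda>n. (T ^^ n) x)"
    using assms(1) inj_on_finite by blast
  then obtain i j where "i \<noteq> j" "(T ^^ i) x = (T ^^ j) x"
    unfolding inj_on_def by blast
  then obtain i j where "i < j" "(T ^^ i) x = (T ^^ j) x"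
    by (metis linorder_neqE_nat)
  then have "(T ^^ (j - i)) x = x"
    using funpow_cancel_inj_on[OF into inj assms(3), of i "j - i"] by simp
  with \<open>i < j\<close> show ?thesis by (intro exI[of _ "j - i"]) simp
qed

lemma homomesicI_periodic:
  assumes fin: "finite S" and bij: "bij_betw T S S"
    and orbit_sum: "\<And>x n. x \<in> S \<Longrightarrow> 0 < n \<Longrightarrow> (T ^^ n) x = x \<Longrightarrow>
      (\<Sum>t<n. \<phi> ((T ^^ t) x)) = real n * c"
  shows "homomesic S T \<phi>"
  unfolding homomesic_def
proof (intro conjI exI ballI fin bij)
  fix x assume x: "x \<in> S"
  define n where "n = least_power T x"
  obtain m where m: "0 < m" "(T ^^ m) x = x"
    using bij_betw_periodic_point[OF fin bij x] by blast
  then have n: "0 < n" "(T ^^ n) x = x"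
    using least_powerI[OF m(2,1)] unfolding n_def by simp_all
  have "(T ^^ k) x \<noteq> x" if "0 < k" "k < n" for k
    using least_power_le[where f = T and x = x] that unfolding n_def by fastforce
  then have "inj_on (\<lambda>t. (T ^^ t) x) {0..<n}"
    by (intro inj_on_funpow_least[OF n(2)])
  then have inj: "inj_on (\<lambda>t. (T ^^ t) x) {..<n}"
    by (simp add: atLeast0LessThan)
  have "(T ^^ m) x \<in> (\<lambda>t. (T ^^ t) x) ` {..<n}" for m
    using funpow_mod_eq[OF n(2), of m] n(1) by (metis imageI lessThan_iff mod_less_divisor)
  then have orbit: "orbit_of T x = (\<lambda>t. (T ^^ t) x) ` {..<n}"
    unfolding orbit_of_def by blast
  have "(\<Sum>y\<in>orbit_of T x. \<phi> y) = real n * c"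
    unfolding orbit using orbit_sum[OF x n] by (simp add: sum.reindex[OF inj])
  moreover have "card (orbit_of T x) = n"
    unfolding orbit using card_image[OF inj] by simp
  ultimately show "(\<Sum>y\<in>orbit_of T x. \<phi> y) / real (card (orbit_of T x)) = c"
    using n(1) by simp
qed

lemma sum_lessThan_shift_periodic:
  fixes \<phi> :: "nat \<Rightarrow> 'a::cancel_comm_monoid_add"
  assumes "\<And>t. \<phi> (t + n) = \<phi> t"
  shows "(\<Sum>t<n. \<phi> (t + s)) = (\<Sum>t<n. \<phi> t)"
proof (induction s)
  case (Suc s)
  have "(\<Sum>t<n. \<phi> (t + Suc s)) + \<phi> s = (\<Sum>t<Suc n. \<phi> (t + s))"
    by (simp add: sum.lessThan_Suc_shift add.commute del: sum.lessThan_Suc)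
  also have "\<dots> = (\<Sum>t<n. \<phi> (t + s)) + \<phi> s"
    using assms[of s] by (simp add: add.commute)
  finally show ?case using Suc.IH by simp
qed simp

section \<open>Skew shapes and height functions\<close>

text \<open>Column \<open>c\<close> of the shape consists of the cells \<open>(c, j)\<close> with \<open>b c < j \<le> a\<close>:
  \<open>Qaa a\<close> is the case \<open>b c = 0\<close> and \<open>Ua a\<close> the case \<open>b c = a - c\<close>.\<close>

locale skew_shape =
  fixes a :: nat and b :: "nat \<Rightarrow> nat"
  assumes b_0: "b 0 = a"
    and b_Suc_le: "b (Suc c) \<le> b c"
    and b_beyond: "a < c \<Longrightarrow> b c = 0"
begin

lemma b_le: "b c \<le> a"
  using lift_Suc_antimono_le[of b 0 c] b_Suc_le b_0 by simp

definition shape :: "(nat \<times> nat) set" where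
  "shape = {(c, j). 1 \<le> c \<and> c \<le> a \<and> b c < j \<and> j \<le> a}"

definition column :: "nat \<Rightarrow> (nat \<times> nat) list" where
  "column c = map (\<lambda>j. (c, j)) [Suc (b c)..<a+1]"

text \<open>An order ideal of the shape is recorded by the height of each of its columns; the
  sentinel values at columns \<open>0\<close> and \<open>a + 1\<close> let neighbours be compared uniformly.\<close>

definition is_height :: "(nat \<Rightarrow> nat) \<Rightarrow> bool" where
  "is_height h \<longleftrightarrow> h 0 = a \<and> (\<forall>c>a. h c = 0) \<and> (\<forall>c. b c \<le> h c \<and> h (Suc c) \<le> h c)"

definition ideal_of :: "(nat \<Rightarrow> nat) \<Rightarrow> (nat \<times> nat) set" where
  "ideal_of h = (SIGMA c:{1..a}. {b c<..h c})"

lemma is_height_Suc_le: "is_height h \<Longrightarrow> h (Suc c) \<le> h c"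
  unfolding is_height_def by blast

lemma is_height_ge: "is_height h \<Longrightarrow> b c \<le> h c"
  unfolding is_height_def by blast

lemma is_height_antimono: "is_height h \<Longrightarrow> c \<le> c' \<Longrightarrow> h c' \<le> h c"
  using lift_Suc_antimono_le[of h] is_height_Suc_le by blast

lemma is_height_le: "is_height h \<Longrightarrow> h c \<le> a"
  using is_height_antimono[of h 0 c] unfolding is_height_def by simp

lemma mem_ideal_of: "(c, j) \<in> ideal_of h \<longleftrightarrow> 1 \<le> c \<and> c \<le> a \<and> b c < j \<and> j \<le> h c"
  by (auto simp: ideal_of_def)

lemma is_order_ideal_ideal_of:
  assumes h: "is_height h"
  shows "is_order_ideal shape (ideal_of h)"
  unfolding is_order_ideal_def
proof (intro conjI ballI impI)
  show "ideal_of h \<subseteq> shape"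
    unfolding shape_def ideal_of_def using is_height_le[OF h] by (auto intro: le_trans)
next
  fix x y assume "x \<in> ideal_of h" "y \<in> shape" "cw_le y x"
  moreover have "h (fst x) \<le> h (fst y)"
    using \<open>cw_le y x\<close> is_height_antimono[OF h] by (simp add: cw_le_def)
  ultimately show "y \<in> ideal_of h"
    by (cases x, cases y) (auto simp: shape_def mem_ideal_of cw_le_def)
qed

definition height_of :: "(nat \<times> nat) set \<Rightarrow> nat \<Rightarrow> nat" where
  "height_of I c = (if c = 0 then a else if a < c then 0 else Max (insert (b c) {j. (c, j) \<in> I}))"

context
  fixes I assumes I: "is_order_ideal shape I"
begin

lemma finite_column_of_ideal: "finite (insert (b c) {j. (c, j) \<in> I})"
  by (rule finite_subset[of _ "{..a}"]) (use I b_le in \<open>auto simp: shape_def is_order_ideal_def\<close>)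

lemma height_of_ge: "b c \<le> height_of I c"
  using finite_column_of_ideal[of c] b_0 b_beyond[of c] by (simp add: height_of_def)

lemma height_of_le: "height_of I c \<le> a"
  using finite_column_of_ideal[of c] I b_le[of c]
  by (auto simp: height_of_def shape_def is_order_ideal_def intro!: Max.boundedI)

lemma mem_ideal_iff_height_of: "(c, j) \<in> I \<longleftrightarrow> 1 \<le> c \<and> c \<le> a \<and> b c < j \<and> j \<le> height_of I c"
proof
  assume cj: "(c, j) \<in> I"
  then have "1 \<le> c \<and> c \<le> a \<and> b c < j"
    using I by (auto simp: is_order_ideal_def shape_def)
  moreover have "j \<le> Max (insert (b c) {j. (c, j) \<in> I})"
    using cj finite_column_of_ideal[of c] by simp
  ultimately show "1 \<le> c \<and> c \<le> a \<and> b c < j \<and> j \<le> height_of I c"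
    by (simp add: height_of_def)
next
  assume c: "1 \<le> c \<and> c \<le> a \<and> b c < j \<and> j \<le> height_of I c"
  have "Max (insert (b c) {j. (c, j) \<in> I}) \<in> insert (b c) {j. (c, j) \<in> I}"
    by (rule Max_in[OF finite_column_of_ideal]) simp
  then have "(c, height_of I c) \<in> I"
    using c by (auto simp: height_of_def)
  moreover have "(c, j) \<in> shape"
    using c height_of_le[of c] by (simp add: shape_def)
  ultimately show "(c, j) \<in> I"
    using I c unfolding is_order_ideal_def cw_le_def by fastforce
qed

lemma is_height_height_of: "is_height (height_of I)"
proof -
  have "height_of I (Suc c) \<le> height_of I c" for c
  proof (cases "height_of I (Suc c) \<le> b c")
    case False
    have "c \<noteq> 0"
      using False height_of_le[of "Suc c"] b_0 by (cases c) auto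
    moreover have "c < a"
      using False by (auto simp: height_of_def split: if_splits)
    ultimately have "(Suc c, height_of I (Suc c)) \<in> I" "(c, height_of I (Suc c)) \<in> shape"
      using False b_Suc_le[of c] height_of_le[of "Suc c"]
      by (auto simp: mem_ideal_iff_height_of shape_def)
    then have "(c, height_of I (Suc c)) \<in> I"
      using I unfolding is_order_ideal_def cw_le_def by fastforce
    then show ?thesis
      by (simp add: mem_ideal_iff_height_of)
  qed (use height_of_ge[of c] in linarith)
  then show ?thesis
    using height_of_ge by (simp add: is_height_def height_of_def)
qed

lemma ideal_of_height_of: "ideal_of (height_of I) = I"
  by (auto simp: mem_ideal_of mem_ideal_iff_height_of)

end

lemma inj_on_ideal_of: "inj_on ideal_of (Collect is_height)"
proof (rule inj_onI, rule ext)
  fix h h' c assume h: "h \<in> Collect is_height" and h': "h' \<in> Collect is_height"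
    and eq: "ideal_of h = ideal_of h'"
  have "\<not> h c < h' c" if "is_height h" "is_height h'" "ideal_of h = ideal_of h'" for h h'
  proof
    assume lt: "h c < h' c"
    then have "1 \<le> c \<and> c \<le> a"
      using that(1,2) by (cases "c = 0"; cases "a < c") (auto simp: is_height_def)
    then have "(c, h' c) \<in> ideal_of h'"
      using lt is_height_ge[OF that(1), of c] by (auto simp: mem_ideal_of)
    then have "(c, h' c) \<in> ideal_of h"
      using that(3) by simp
    then show False
      using lt by (simp add: mem_ideal_of)
  qed
  from this[of h h'] this[of h' h] show "h c = h' c"
    using h h' eq by simp
qed

lemma ideals_shape: "ideals shape = ideal_of ` Collect is_height"
proof
  show "ideals shape \<subseteq> ideal_of ` Collect is_height"
    using ideal_of_height_of is_height_height_of unfolding ideals_def by blast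
qed (auto simp: ideals_def is_order_ideal_ideal_of)

lemma finite_shape: "finite shape"
  by (rule finite_subset[of _ "{1..a} \<times> {..a}"]) (auto simp: shape_def)

lemma is_height_fun_upd:
  assumes "is_height h" "1 \<le> c" "c \<le> a" "b c \<le> v" "v \<le> h (c - 1)" "h (Suc c) \<le> v"
  shows "is_height (h(c := v))"
proof -
  have "(h(c := v)) (Suc c') \<le> (h(c := v)) c'" for c'
    using assms is_height_Suc_le[OF assms(1), of c'] by (cases "c' = c"; cases "Suc c' = c") auto
  then show ?thesis
    using assms is_height_le[OF assms(1)] unfolding is_height_def by auto
qed

section \<open>Toggling cells and columns\<close>

lemma toggle_ideal_of_insert:
  assumes h: "is_height h" and c: "1 \<le> c" "c \<le> a" and lt: "h c < h (c - 1)"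
  shows "toggle shape (c, Suc (h c)) (ideal_of h) = ideal_of (h(c := Suc (h c)))"
proof -
  have "insert (c, Suc (h c)) (ideal_of h) = ideal_of (h(c := Suc (h c)))"
    using c is_height_ge[OF h, of c] by (auto simp: mem_ideal_of split: if_splits)
  moreover have "is_height (h(c := Suc (h c)))"
    using lt c is_height_ge[OF h, of c] is_height_Suc_le[OF h, of c]
    by (intro is_height_fun_upd[OF h]) auto
  ultimately show ?thesis
    unfolding toggle_def by (simp add: mem_ideal_of is_order_ideal_ideal_of)
qed

lemma toggle_ideal_of_remove:
  assumes h: "is_height h" and c: "1 \<le> c" "c \<le> a" and lt: "b c < h c" "h (Suc c) < h c"
  shows "toggle shape (c, h c) (ideal_of h) = ideal_of (h(c := h c - 1))"
proof -
  have "ideal_of h - {(c, h c)} = ideal_of (h(c := h c - 1))"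
    using c lt by (auto simp: mem_ideal_of split: if_splits)
  moreover have "is_height (h(c := h c - 1))"
    using lt c is_height_antimono[OF h, of "c - 1" c]
    by (intro is_height_fun_upd[OF h]) auto
  ultimately show ?thesis
    unfolding toggle_def using c lt by (simp add: mem_ideal_of is_order_ideal_ideal_of)
qed

lemma not_is_order_ideal_insert:
  assumes h: "is_height h" and c: "1 \<le> c" "c \<le> a" and j: "h c < j" "j \<le> a"
    and blocked: "j = Suc (h c) \<Longrightarrow> h (c - 1) \<le> h c"
  shows "\<not> is_order_ideal shape (insert (c, j) (ideal_of h))"
proof (cases "j = Suc (h c)")
  case True
  then have "c \<noteq> 1"
    using blocked j h by (auto simp: is_height_def)
  moreover have "b (c - 1) < j"
    using is_height_ge[OF h, of "c - 1"] blocked True by simp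
  ultimately show ?thesis
    using c j blocked True
    by (intro not_is_order_ideal[of "(c, j)" _ "(c - 1, j)"]) (auto simp: cw_le_def shape_def mem_ideal_of)
next
  case False
  then show ?thesis
    using c j is_height_ge[OF h, of c]
    by (intro not_is_order_ideal[of "(c, j)" _ "(c, Suc (h c))"]) (auto simp: cw_le_def shape_def mem_ideal_of)
qed

lemma not_is_order_ideal_remove:
  assumes h: "is_height h" and c: "1 \<le> c" "c \<le> a" and j: "b c < j" "j \<le> h c"
    and blocked: "j = h c \<Longrightarrow> h c \<le> h (Suc c)"
  shows "\<not> is_order_ideal shape (ideal_of h - {(c, j)})"
proof (cases "j = h c")
  case True
  then have "c \<noteq> a"
    using blocked j h by (auto simp: is_height_def)
  then show ?thesis
    using c j blocked True b_Suc_le[of c] is_height_le[OF h, of c]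
    by (intro not_is_order_ideal[of "(Suc c, j)" _ "(c, j)"]) (auto simp: cw_le_def shape_def mem_ideal_of)
next
  case False
  then show ?thesis
    using c j is_height_le[OF h, of c]
    by (intro not_is_order_ideal[of "(c, h c)" _ "(c, j)"]) (auto simp: cw_le_def shape_def mem_ideal_of)
qed

lemma toggle_ideal_of:
  assumes h: "is_height h" and c: "1 \<le> c" "c \<le> a" and j: "b c < j" "j \<le> a"
  shows "toggle shape (c, j) (ideal_of h) = ideal_of (h(c :=
    if j = Suc (h c) \<and> h c < h (c - 1) then j else if j = h c \<and> h (Suc c) < j then j - 1 else h c))"
    (is "_ = ideal_of (h(c := ?v))")
proof -
  consider (insert) "j = Suc (h c)" "h c < h (c - 1)" | (remove) "j = h c" "h (Suc c) < j"
    | (above) "h c < j" "j = Suc (h c) \<Longrightarrow> h (c - 1) \<le> h c"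
    | (below) "j \<le> h c" "j = h c \<Longrightarrow> h c \<le> h (Suc c)"
    by fastforce
  then show ?thesis
  proof cases
    case insert
    then show ?thesis using toggle_ideal_of_insert[OF h c] by simp
  next
    case remove
    then show ?thesis using toggle_ideal_of_remove[OF h c] j by simp
  next
    case above
    then have "?v = h c" and "(c, j) \<notin> ideal_of h"
      by (auto simp: mem_ideal_of)
    moreover have "\<not> is_order_ideal shape (insert (c, j) (ideal_of h))"
      using not_is_order_ideal_insert[OF h c above(1) j(2) above(2)] .
    ultimately show ?thesis
      unfolding toggle_def by simp
  next
    case below
    then have "?v = h c" and "(c, j) \<in> ideal_of h"
      using c j by (auto simp: mem_ideal_of)
    moreover have "\<not> is_order_ideal shape (ideal_of h - {(c, j)})"
      using not_is_order_ideal_remove[OF h c j(1) below] .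
    ultimately show ?thesis
      unfolding toggle_def by simp
  qed
qed

text \<open>The new height of column \<open>c\<close> when the whole column is toggled, given the heights
  \<open>l\<close>, \<open>v\<close>, \<open>r\<close> of columns \<open>c - 1\<close>, \<open>c\<close>, \<open>c + 1\<close>.\<close>

definition toggled :: "nat \<Rightarrow> nat \<Rightarrow> nat \<Rightarrow> nat \<Rightarrow> nat" where
  "toggled c l v r = (if v < l then Suc v else max r (b c))"

definition toggle_column :: "nat \<Rightarrow> (nat \<Rightarrow> nat) \<Rightarrow> nat \<Rightarrow> nat" where
  "toggle_column c h = h(c := toggled c (h (c - 1)) (h c) (h (Suc c)))"

text \<open>The height of column \<open>c\<close> after toggling only its cells \<open>j, \<dots>, a\<close>, top cell first.\<close>

definition sweep :: "nat \<Rightarrow> nat \<Rightarrow> nat \<Rightarrow> nat \<Rightarrow> nat \<Rightarrow> nat" where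
  "sweep c l v r j = (if v < l then (if j \<le> Suc v then Suc v else v)
     else if j \<le> v then max (max r (b c)) (j - 1) else v)"

context
  fixes c l v r :: nat
  assumes v: "v \<le> l" "b c \<le> v" "r \<le> v"
begin

lemma sweep_bounds: "max r (b c) \<le> sweep c l v r j \<and> sweep c l v r j \<le> l"
  using v unfolding sweep_def by auto

lemma sweep_step: "b c < j \<Longrightarrow> sweep c l v r j =
  (if j = Suc (sweep c l v r (Suc j)) \<and> sweep c l v r (Suc j) < l then j
   else if j = sweep c l v r (Suc j) \<and> r < j then j - 1 else sweep c l v r (Suc j))"
  using v unfolding sweep_def by (auto simp: max_def)

lemma sweep_from_top: "l \<le> a \<Longrightarrow> sweep c l v r (a + 1) = v"
  using v unfolding sweep_def by auto

lemma sweep_whole_column: "sweep c l v r (Suc (b c)) = toggled c l v r"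
  using v unfolding sweep_def toggled_def by (auto simp: max_def)

end

lemma foldr_toggle_column_from:
  assumes h: "is_height h" and c: "1 \<le> c" "c \<le> a"
    and j: "Suc (b c) \<le> j" "j \<le> a + 1"
  shows "foldr (toggle shape) (map (\<lambda>j. (c, j)) [j..<a+1]) (ideal_of h)
    = ideal_of (h(c := sweep c (h (c - 1)) (h c) (h (Suc c)) j))"
  using j(2,1)
proof (induction j rule: inc_induct)
  case base
  show ?case
    using sweep_from_top[where c = c and l = "h (c - 1)" and v = "h c" and r = "h (Suc c)"] is_height_ge[OF h, of c]
      is_height_Suc_le[OF h, of c] is_height_antimono[OF h, of "c - 1" c] is_height_le[OF h]
    by simp
next
  case (step n)
  let ?w = "sweep c (h (c - 1)) (h c) (h (Suc c)) (Suc n)"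
  have v: "h c \<le> h (c - 1)" "b c \<le> h c" "h (Suc c) \<le> h c"
    using is_height_antimono[OF h, of "c - 1" c] is_height_ge[OF h] is_height_Suc_le[OF h] by simp_all
  have hw: "is_height (h(c := ?w))"
    using sweep_bounds[OF v] c by (intro is_height_fun_upd[OF h]) auto
  have n: "b c < n" "n \<le> a"
    using step.hyps j(1) by simp_all
  have "[n..<a+1] = n # [Suc n..<a+1]"
    using step.hyps by (simp add: upt_conv_Cons)
  then have "foldr (toggle shape) (map (\<lambda>j. (c, j)) [n..<a+1]) (ideal_of h)
      = toggle shape (c, n) (ideal_of (h(c := ?w)))"
    using step.IH n(1) by (simp only: list.map foldr_Cons o_apply Suc_le_mono Suc_le_eq)
  also have "\<dots> = ideal_of (h(c :=
      if n = Suc ?w \<and> ?w < h (c - 1) then n else if n = ?w \<and> h (Suc c) < n then n - 1 else ?w))"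
    using toggle_ideal_of[OF hw c n] c
    by (simp only: fun_upd_upd fun_upd_same fun_upd_other[of "c - 1" c] fun_upd_other[of "Suc c" c])
  also have "\<dots> = ideal_of (h(c := sweep c (h (c - 1)) (h c) (h (Suc c)) n))"
    by (simp only: sweep_step[OF v n(1)])
  finally show ?case .
qed

lemma chain_toggle_column:
  assumes "is_height h" "1 \<le> c" "c \<le> a"
  shows "chain_toggle shape (column c) (ideal_of h) = ideal_of (toggle_column c h)"
proof -
  have "chain_toggle shape (column c) (ideal_of h)
      = ideal_of (h(c := sweep c (h (c - 1)) (h c) (h (Suc c)) (Suc (b c))))"
    unfolding chain_toggle_def column_def
    by (rule foldr_toggle_column_from[OF assms order.refl]) (use b_le[of c] in simp)
  also have "\<dots> = ideal_of (toggle_column c h)"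
    unfolding toggle_column_def
    using sweep_whole_column[where c = c and l = "h (c - 1)" and v = "h c" and r = "h (Suc c)"]
      is_height_ge[OF assms(1), of c] is_height_Suc_le[OF assms(1), of c]
      is_height_antimono[OF assms(1), of "c - 1" c]
    by simp
  finally show ?thesis .
qed

lemma is_height_toggle_column:
  assumes h: "is_height h" and c: "1 \<le> c" "c \<le> a"
  shows "is_height (toggle_column c h)"
  using c is_height_antimono[OF h, of "c - 1" c] is_height_ge[OF h, of c] is_height_Suc_le[OF h, of c]
  unfolding toggle_column_def toggled_def by (intro is_height_fun_upd[OF h]) auto

definition comotion_height :: "(nat \<Rightarrow> nat) \<Rightarrow> (nat \<Rightarrow> nat) \<Rightarrow> nat \<Rightarrow> nat" where
  "comotion_height \<nu> = fold (\<lambda>k. toggle_column (\<nu> k)) [1..<a+1]"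

lemma fold_toggle_column:
  assumes "\<forall>k\<in>set ks. 1 \<le> \<nu> k \<and> \<nu> k \<le> a" "is_height h"
  shows "is_height (fold (\<lambda>k. toggle_column (\<nu> k)) ks h)
    \<and> fold (\<lambda>k. chain_toggle shape (column (\<nu> k))) ks (ideal_of h)
      = ideal_of (fold (\<lambda>k. toggle_column (\<nu> k)) ks h)"
  using assms
proof (induction ks arbitrary: h)
  case (Cons k ks)
  then have k: "1 \<le> \<nu> k" "\<nu> k \<le> a" by simp_all
  show ?case
    using Cons.IH[of "toggle_column (\<nu> k) h"] Cons.prems
      is_height_toggle_column[OF Cons.prems(2) k] chain_toggle_column[OF Cons.prems(2) k]
    by simp
qed simp

lemma comotion_ideal_of:
  assumes "\<forall>k\<in>{1..a}. 1 \<le> \<nu> k \<and> \<nu> k \<le> a" "is_height h"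
  shows "is_height (comotion_height \<nu> h)"
    and "comotion shape column a \<nu> (ideal_of h) = ideal_of (comotion_height \<nu> h)"
  using fold_toggle_column[of "[1..<a+1]" \<nu> h] assms
  unfolding comotion_def comotion_height_def by auto

section \<open>Weights and promotion\<close>

definition column_weight :: "nat \<Rightarrow> nat \<Rightarrow> real" where
  "column_weight c v = (\<Sum>j\<in>{b c<..v}. (-1) ^ (c + j))"

definition weight :: "(nat \<Rightarrow> nat) \<Rightarrow> real" where
  "weight h = (\<Sum>c\<in>{1..a}. column_weight c (h c))"

lemma Rstat_ideal_of: "Rstat (ideal_of h) = weight h"
  unfolding Rstat_def ideal_of_def weight_def column_weight_def
  by (rule sum.Sigma[symmetric]) auto

lemma column_weight_add: "column_weight c (b c + x) = (if odd x then (-1) ^ (c + b c + 1) else 0)"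
proof (induction x)
  case (Suc x)
  have "{b c<..b c + Suc x} = insert (b c + Suc x) {b c<..b c + x}"
    by auto
  then have "column_weight c (b c + Suc x) = (-1) ^ (c + (b c + Suc x)) + column_weight c (b c + x)"
    unfolding column_weight_def by simp
  then show ?case
    using Suc.IH by (auto simp: power_add)
qed (simp add: column_weight_def)

text \<open>Toggling the columns \<open>1, \<dots>, a\<close> in this order (promotion) takes \<open>g\<close> to \<open>g'\<close>:
  column \<open>c\<close> sees its left neighbour already toggled and its right neighbour not yet.\<close>

definition promotes :: "(nat \<Rightarrow> nat) \<Rightarrow> (nat \<Rightarrow> nat) \<Rightarrow> bool" where
  "promotes g g' \<longleftrightarrow> (\<forall>c\<in>{1..a}. g' c = toggled c (g' (c - 1)) (g c) (g (Suc c)))"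

lemma promotes_le_left:
  assumes g: "is_height g" and g': "is_height g'" and p: "promotes g g'" and c: "1 \<le> c" "c \<le> a"
  shows "g c \<le> g' (c - 1)"
proof (cases "c = 1")
  case True
  then show ?thesis using is_height_le[OF g] g' by (simp add: is_height_def)
next
  case False
  then obtain d where d: "c = Suc d" "1 \<le> d"
    using c by (cases c) auto
  then have "g' d = toggled d (g' (d - 1)) (g d) (g c)"
    using p c by (simp add: promotes_def)
  moreover have "g c \<le> g d"
    using is_height_Suc_le[OF g] d by simp
  ultimately show ?thesis
    using d by (simp add: toggled_def)
qed

lemma promotes_lt_left_Suc:
  assumes g: "is_height g" and p: "promotes g g'" and c: "1 \<le> c" "c \<le> a"
    and lt: "g c < g' (c - 1)"
  shows "g' c = Suc (g c)" and "g (Suc c) < g' c"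
proof -
  show "g' c = Suc (g c)"
    using p c lt by (simp add: promotes_def toggled_def)
  then show "g (Suc c) < g' c"
    using is_height_Suc_le[OF g, of c] by simp
qed

lemma promotes_Suc_everywhere:
  assumes g: "is_height g" and g': "is_height g'" and p: "promotes g g'" and lt: "g 1 < a"
  shows "1 \<le> c \<Longrightarrow> c \<le> a \<Longrightarrow> g' c = Suc (g c) \<and> g (Suc c) < g' c"
proof (induction c rule: nat_induct_at_least)
  case base
  then show ?case
    using promotes_lt_left_Suc[OF g p, of 1] lt g' by (simp add: is_height_def)
next
  case (Suc c)
  then show ?case
    using promotes_lt_left_Suc[OF g p, of "Suc c"] by simp
qed

lemma promotes_drop_last:
  assumes g: "is_height g" and p: "promotes g g'" and c: "1 \<le> c" "c \<le> a"
    and drop: "\<not> g c < g' (c - 1)" and last: "c = a \<or> g (Suc c) < g' c"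
  shows "g' c = b c"
proof -
  have g'c: "g' c = max (g (Suc c)) (b c)"
    using p c drop by (simp add: promotes_def toggled_def)
  show ?thesis
  proof (cases "c = a")
    case True
    then show ?thesis using g'c g by (simp add: is_height_def)
  next
    case False
    then show ?thesis using g'c last by (simp add: max_def split: if_splits)
  qed
qed

lemma sum_alternating: "(\<Sum>c\<in>{1..n}. (-1::real) ^ (c + 1)) = of_bool (odd n)"
  by (induction n) (auto simp: sum.cl_ivl_Suc)

lemma sum_alternating_pairs:
  "(\<Sum>c\<in>{1..n}. (-1::real) ^ (c + 1) * (\<phi> c + \<phi> (Suc c))) = \<phi> 1 + (-1) ^ (n + 1) * \<phi> (Suc n)"
  by (induction n) (auto simp: sum.cl_ivl_Suc algebra_simps)

lemma sum_telescope_pred: "(\<Sum>c\<in>{1..n::nat}. f c - f (c - 1)) = f n - (f 0 :: real)"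
  by (induction n) (auto simp: sum.cl_ivl_Suc)

lemma promotes_shift_rectangle:
  assumes b_rect: "\<And>c. 0 < c \<Longrightarrow> b c = 0"
    and g': "is_height g'" and p: "promotes g g'" and g1: "g 1 = a"
  shows "1 \<le> c \<Longrightarrow> c \<le> a \<Longrightarrow> g' c = g (Suc c) \<and> \<not> g (Suc c) < g' c"
proof (induction c rule: nat_induct_at_least)
  case base
  then show ?case
    using p g1 g' b_rect[of 1] by (simp add: promotes_def toggled_def is_height_def)
next
  case (Suc c)
  then show ?case
    using p b_rect[of "Suc c"] by (simp add: promotes_def toggled_def)
qed

lemma weight_promotes_rectangle:
  assumes b_rect: "\<And>c. 0 < c \<Longrightarrow> b c = 0"
    and g: "is_height g" and g': "is_height g'" and p: "promotes g g'"
  shows "weight g + weight g' = of_bool (odd a)"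
proof -
  have weight: "column_weight c v = (-1) ^ (c + 1) * of_bool (odd v)" if "0 < c" for c v
    using column_weight_add[of c v] b_rect[OF that] by simp
  have "weight g + weight g' = (\<Sum>c\<in>{1..a}. column_weight c (g c) + column_weight c (g' c))"
    unfolding weight_def by (simp add: sum.distrib)
  also have "\<dots> = of_bool (odd a)"
  proof (cases "g 1 < a")
    case True
    then have "g' c = Suc (g c)" if "c \<in> {1..a}" for c
      using promotes_Suc_everywhere[OF g g' p] that by simp
    then have "(\<Sum>c\<in>{1..a}. column_weight c (g c) + column_weight c (g' c))
        = (\<Sum>c\<in>{1..a}. (-1::real) ^ (c + 1))"
      by (intro sum.cong) (auto simp: weight algebra_simps)
    then show ?thesis using sum_alternating by simp
  next
    case False
    then have g1: "g 1 = a"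
      using is_height_le[OF g, of 1] by simp
    then have "(\<Sum>c\<in>{1..a}. column_weight c (g c) + column_weight c (g' c))
        = (\<Sum>c\<in>{1..a}. (-1) ^ (c + 1) * (of_bool (odd (g c)) + of_bool (odd (g (Suc c)))))"
      using promotes_shift_rectangle[OF b_rect g' p] by (intro sum.cong) (auto simp: weight algebra_simps)
    also have "\<dots> = of_bool (odd a)"
      using sum_alternating_pairs[where n = a and \<phi> = "\<lambda>c. of_bool (odd (g c))"] g1 g
      by (cases "a = 0") (auto simp: is_height_def)
    finally show ?thesis .
  qed
  finally show ?thesis .
qed

definition lowered :: "(nat \<Rightarrow> nat) \<Rightarrow> (nat \<Rightarrow> nat) \<Rightarrow> nat \<Rightarrow> bool" where
  "lowered g g' c \<longleftrightarrow> 1 \<le> c \<and> c \<le> a \<and> \<not> g c < g' (c - 1)"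

text \<open>In the staircase the weight of a column is \<open>(-1)^(a+1)\<close> times the parity of its
  number of cells. A column raised by promotion has one more cell in \<open>g'\<close> than in \<open>g\<close>, so
  exactly one of the two counts is odd. The lowered columns form an initial segment, and on it
  column \<open>c\<close> of \<open>g\<close> has one cell more than column \<open>c - 1\<close> of \<open>g'\<close>; so their parities
  telescope, and the last lowered column of \<open>g'\<close> is empty.\<close>

lemma staircase_column_parities:
  assumes b_stair: "\<And>c. b c = a - c"
    and g: "is_height g" and g': "is_height g'" and p: "promotes g g'" and c: "1 \<le> c" "c \<le> a"
  shows "of_bool (odd (g c - b c)) + of_bool (odd (g' c - b c))
    = (1::real) + of_bool (lowered g g' (Suc c) \<and> odd (g' c - b c))
        - of_bool (lowered g g' c \<and> odd (g' (c - 1) - b (c - 1)))"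
proof -
  define x y y\<^sub>0 where "x = g c - b c" and "y = g' c - b c" and "y\<^sub>0 = g' (c - 1) - b (c - 1)"
  have "of_bool (odd x) + of_bool (odd y)
    = (1::real) + of_bool (lowered g g' (Suc c) \<and> odd y) - of_bool (lowered g g' c \<and> odd y\<^sub>0)"
  proof (cases "lowered g g' c")
    case False
    then have "g c < g' (c - 1)"
      using c by (simp add: lowered_def)
    then have "y = Suc x" and "\<not> lowered g g' (Suc c)"
      using promotes_lt_left_Suc[OF g p c] is_height_ge[OF g, of c]
      by (auto simp: lowered_def x_def y_def)
    then show ?thesis
      using False by simp
  next
    case True
    have "g c = g' (c - 1)"
      using True promotes_le_left[OF g g' p c] by (simp add: lowered_def)
    moreover have "b (c - 1) = Suc (b c)" and "b (c - 1) \<le> g' (c - 1)"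
      using b_stair c is_height_ge[OF g', of "c - 1"] by simp_all
    ultimately have "x = Suc y\<^sub>0"
      by (simp add: x_def y\<^sub>0_def)
    moreover have "lowered g g' (Suc c)" if "odd y"
    proof (rule ccontr)
      assume "\<not> lowered g g' (Suc c)"
      then have "c = a \<or> g (Suc c) < g' c"
        using c by (auto simp: lowered_def)
      then have "y = 0"
        using promotes_drop_last[OF g p c] True by (simp add: lowered_def y_def)
      with that show False
        by simp
    qed
    ultimately show ?thesis
      using True by auto
  qed
  then show ?thesis
    unfolding x_def y_def y\<^sub>0_def .
qed

lemma weight_promotes_staircase:
  assumes b_stair: "\<And>c. b c = a - c"
    and g: "is_height g" and g': "is_height g'" and p: "promotes g g'"
  shows "weight g + weight g' = (-1) ^ (a + 1) * real a"
proof -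
  define \<psi> :: "nat \<Rightarrow> real" where "\<psi> c = of_bool (lowered g g' (Suc c) \<and> odd (g' c - b c))" for c
  have "column_weight c (g c) + column_weight c (g' c) = (-1) ^ (a + 1) * (1 + (\<psi> c - \<psi> (c - 1)))"
    if c: "1 \<le> c" "c \<le> a" for c
  proof -
    have "c + b c + 1 = a + 1"
      using b_stair[of c] c by simp
    then have "column_weight c (g c) + column_weight c (g' c)
        = (-1) ^ (a + 1) * (of_bool (odd (g c - b c)) + of_bool (odd (g' c - b c)))"
      using column_weight_add[of c "g c - b c"] column_weight_add[of c "g' c - b c"]
        is_height_ge[OF g, of c] is_height_ge[OF g', of c]
      by (simp add: algebra_simps)
    then show ?thesis
      using staircase_column_parities[OF b_stair g g' p c] c by (simp add: \<psi>_def)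
  qed
  then have "weight g + weight g' = (\<Sum>c\<in>{1..a}. (-1) ^ (a + 1) * (1 + (\<psi> c - \<psi> (c - 1))))"
    unfolding weight_def sum.distrib[symmetric] by (intro sum.cong) auto
  also have "\<dots> = (-1) ^ (a + 1) * (\<Sum>c\<in>{1..a}. 1 + (\<psi> c - \<psi> (c - 1)))"
    by (rule sum_distrib_left[symmetric])
  also have "(\<Sum>c\<in>{1..a}. 1 + (\<psi> c - \<psi> (c - 1))) = real a + (\<psi> a - \<psi> 0)"
    unfolding sum.distrib sum_telescope_pred by simp
  also have "\<psi> a - \<psi> 0 = 0"
    using g' b_0 by (simp add: \<psi>_def lowered_def is_height_def)
  finally show ?thesis by simp
qed

end

section \<open>Comotion realigned as promotion\<close>

locale skew_shape_comotion = skew_shape +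
  fixes \<nu> :: "nat \<Rightarrow> nat"
  assumes \<nu>: "\<nu> permutes {1..a}"
begin

abbreviation T :: "(nat \<Rightarrow> nat) \<Rightarrow> nat \<Rightarrow> nat" where
  "T \<equiv> comotion_height \<nu>"

definition pos :: "nat \<Rightarrow> nat" where
  "pos = inv \<nu>"

lemma \<nu>_in: "k \<in> {1..a} \<Longrightarrow> \<nu> k \<in> {1..a}"
  using permutes_in_image[OF \<nu>] by blast

lemma pos_in: "d \<in> {1..a} \<Longrightarrow> pos d \<in> {1..a}"
  using permutes_in_image[OF permutes_inv[OF \<nu>]] unfolding pos_def by blast

lemma \<nu>_pos: "\<nu> (pos d) = d"
  using permutes_inverses(1)[OF \<nu>] unfolding pos_def by simp

lemma pos_\<nu>: "pos (\<nu> k) = k"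
  using permutes_inverses(2)[OF \<nu>] unfolding pos_def by simp

lemma \<nu>_range: "\<forall>k\<in>{1..a}. 1 \<le> \<nu> k \<and> \<nu> k \<le> a"
  using \<nu>_in by auto

lemma is_height_T: "is_height h \<Longrightarrow> is_height (T h)"
  using comotion_ideal_of(1)[OF \<nu>_range] .

lemma is_height_funpow_T: "is_height h \<Longrightarrow> is_height ((T ^^ t) h)"
  by (induction t) (auto intro: is_height_T)

lemma funpow_comotion_ideal_of:
  "is_height h \<Longrightarrow> (comotion shape column a \<nu> ^^ t) (ideal_of h) = ideal_of ((T ^^ t) h)"
  by (induction t) (simp_all add: comotion_ideal_of(2)[OF \<nu>_range] is_height_funpow_T)

definition partial_comotion :: "nat \<Rightarrow> (nat \<Rightarrow> nat) \<Rightarrow> nat \<Rightarrow> nat" where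
  "partial_comotion j = fold (\<lambda>k. toggle_column (\<nu> k)) [1..<j+1]"

lemma partial_comotion_Suc: "partial_comotion (Suc j) h = toggle_column (\<nu> (Suc j)) (partial_comotion j h)"
  unfolding partial_comotion_def by simp

lemma is_height_partial_comotion: "is_height h \<Longrightarrow> j \<le> a \<Longrightarrow> is_height (partial_comotion j h)"
proof (induction j)
  case (Suc j)
  then show ?case
    using is_height_toggle_column[of "partial_comotion j h" "\<nu> (Suc j)"] \<nu>_range by (simp add: partial_comotion_Suc)
qed (simp add: partial_comotion_def)

lemma partial_comotion_apply_pos:
  "j \<le> a \<Longrightarrow> partial_comotion j h d = (if d \<in> {1..a} \<and> pos d \<le> j then partial_comotion (pos d) h d else h d)"
proof (induction j)
  case 0
  then show ?case using pos_in[of d] by (auto simp: partial_comotion_def)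
next
  case (Suc j)
  show ?case
  proof (cases "d = \<nu> (Suc j)")
    case True
    then show ?thesis using pos_\<nu> \<nu>_in[of "Suc j"] Suc.prems by auto
  next
    case False
    then have "partial_comotion (Suc j) h d = partial_comotion j h d"
      by (simp add: partial_comotion_Suc toggle_column_def)
    moreover have "pos d \<noteq> Suc j"
      using False \<nu>_pos[of d] by auto
    ultimately show ?thesis using Suc by auto
  qed
qed

lemma partial_comotion_apply:
  "j \<le> a \<Longrightarrow> partial_comotion j h d = (if d \<in> {1..a} \<and> pos d \<le> j then T h d else h d)"
  using partial_comotion_apply_pos[of j h d] partial_comotion_apply_pos[of a h d] pos_in[of d]
  by (auto simp: comotion_height_def partial_comotion_def)

text \<open>Column \<open>c\<close> is toggled at step \<open>pos c\<close> of comotion, when exactly the columns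
  with smaller \<open>pos\<close> have already been toggled.\<close>

lemma T_apply:
  assumes c: "c \<in> {1..a}"
  shows "T h c = toggled c (if c - 1 \<in> {1..a} \<and> pos (c - 1) < pos c then T h (c - 1) else h (c - 1))
    (h c) (if Suc c \<in> {1..a} \<and> pos (Suc c) < pos c then T h (Suc c) else h (Suc c))"
proof -
  obtain p where p: "pos c = Suc p" "Suc p \<le> a"
    using pos_in[OF c] by (cases "pos c") auto
  have "T h c = partial_comotion (Suc p) h c"
    using partial_comotion_apply[OF p(2), of h c] c p(1) by simp
  also have "\<dots> = toggled c (partial_comotion p h (c - 1)) (partial_comotion p h c) (partial_comotion p h (Suc c))"
    using \<nu>_pos[of c] p(1) by (simp add: partial_comotion_Suc toggle_column_def)
  finally show ?thesis
    using partial_comotion_apply[of p h] p by simp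
qed

lemma T_Suc_le:
  assumes h: "is_height h" and c: "1 \<le> c" "Suc c \<le> a" and lt: "pos (Suc c) < pos c"
  shows "T h (Suc c) \<le> h c"
proof -
  define p where "p = pos (Suc c)"
  have p: "p \<le> a"
    using pos_in[of "Suc c"] c unfolding p_def by simp
  have "partial_comotion p h (Suc c) \<le> partial_comotion p h c"
    using is_height_Suc_le[OF is_height_partial_comotion[OF h p]] .
  then show ?thesis
    using partial_comotion_apply[OF p] lt c unfolding p_def by (auto split: if_splits)
qed

text \<open>Shifting column \<open>c\<close> of an orbit by \<open>delay c\<close> steps, the number of descents of \<open>pos\<close>
  to the left of \<open>c\<close>, turns comotion into promotion (\<open>realign_promotes\<close>).\<close>

definition delay :: "nat \<Rightarrow> nat" where
  "delay c = card {d \<in> {1..<c}. pos (Suc d) < pos d}"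

definition realign :: "(nat \<Rightarrow> nat) \<Rightarrow> nat \<Rightarrow> nat" where
  "realign h c = (if c \<in> {1..a} then (T ^^ delay c) h c else h c)"

lemma delay_Suc: "1 \<le> c \<Longrightarrow> delay (Suc c) = delay c + of_bool (pos (Suc c) < pos c)"
proof -
  assume c: "1 \<le> c"
  have "{d \<in> {1..<Suc c}. pos (Suc d) < pos d} =
      (if pos (Suc c) < pos c then insert c else id) {d \<in> {1..<c}. pos (Suc d) < pos d}"
    using c by (auto simp: less_Suc_eq)
  then show ?thesis
    unfolding delay_def by simp
qed

lemma is_height_realign:
  assumes h: "is_height h"
  shows "is_height (realign h)"
proof -
  have "realign h (Suc c) \<le> realign h c" for c
  proof -
    consider "c = 0" | "1 \<le> c" "Suc c \<le> a" | "a \<le> c"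
      by linarith
    then show ?thesis
    proof cases
      case 1
      then show ?thesis
        using is_height_le[OF is_height_funpow_T[OF h]] h by (simp add: realign_def is_height_def)
    next
      case 2
      show ?thesis
      proof (cases "pos (Suc c) < pos c")
        case True
        then show ?thesis
          using 2 T_Suc_le[OF is_height_funpow_T[OF h] 2] delay_Suc[of c]
          by (simp add: realign_def)
      next
        case False
        then show ?thesis
          using 2 is_height_Suc_le[OF is_height_funpow_T[OF h]] delay_Suc[of c]
          by (simp add: realign_def)
      qed
    next
      case 3
      then show ?thesis
        using h by (simp add: realign_def is_height_def)
    qed
  qed
  moreover have "b c \<le> realign h c" for c
    using is_height_ge[OF is_height_funpow_T[OF h]] is_height_ge[OF h] by (simp add: realign_def)
  ultimately show ?thesis
    using h by (simp add: is_height_def realign_def)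
qed

lemma realign_T_pred:
  assumes h: "is_height h" and c: "c \<in> {1..a}"
  shows "realign (T h) (c - 1) = (if c - 1 \<in> {1..a} \<and> pos (c - 1) < pos c
    then T ((T ^^ delay c) h) (c - 1) else (T ^^ delay c) h (c - 1))"
proof (cases "c = 1")
  case True
  then show ?thesis
    using is_height_T[OF h] is_height_funpow_T[OF h] by (simp add: realign_def is_height_def)
next
  case False
  then obtain d where d: "c = Suc d" "1 \<le> d" "Suc d \<le> a"
    using c by (cases c) auto
  have "pos d \<noteq> pos c"
    using \<nu>_pos[of d] \<nu>_pos[of c] d(1) by force
  then show ?thesis
    using d delay_Suc[of d] by (auto simp: realign_def funpow_swap1)
qed

lemma realign_Suc:
  assumes h: "is_height h" and c: "c \<in> {1..a}"
  shows "realign h (Suc c) = (if Suc c \<in> {1..a} \<and> pos (Suc c) < pos c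
    then T ((T ^^ delay c) h) (Suc c) else (T ^^ delay c) h (Suc c))"
proof (cases "c = a")
  case True
  then show ?thesis
    using h is_height_funpow_T[OF h] by (simp add: realign_def is_height_def)
next
  case False
  then show ?thesis
    using c delay_Suc[of c] by (auto simp: realign_def)
qed

lemma realign_promotes:
  assumes h: "is_height h"
  shows "promotes (realign h) (realign (T h))"
  unfolding promotes_def
proof
  fix c assume c: "c \<in> {1..a}"
  have "realign (T h) c = T ((T ^^ delay c) h) c"
    using c by (simp add: realign_def funpow_swap1)
  also have "\<dots> = toggled c (realign (T h) (c - 1)) (realign h c) (realign h (Suc c))"
    using T_apply[OF c, of "(T ^^ delay c) h"] realign_T_pred[OF h c] realign_Suc[OF h c] c
    by (simp add: realign_def)
  finally show "realign (T h) c = toggled c (realign (T h) (c - 1)) (realign h c) (realign h (Suc c))" .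
qed

lemma sum_weight_realign:
  assumes per: "(T ^^ n) h = h"
  shows "(\<Sum>t<n. weight (realign ((T ^^ t) h))) = (\<Sum>t<n. weight ((T ^^ t) h))"
proof -
  have per': "(T ^^ (t + n)) h = (T ^^ t) h" for t
    using per by (simp add: funpow_add)
  have "(\<Sum>t<n. weight (realign ((T ^^ t) h)))
      = (\<Sum>c\<in>{1..a}. \<Sum>t<n. column_weight c ((T ^^ (t + delay c)) h c))"
    unfolding weight_def realign_def
    by (subst sum.swap) (simp add: funpow_add add.commute[of _ "delay _"])
  also have "\<dots> = (\<Sum>c\<in>{1..a}. \<Sum>t<n. column_weight c ((T ^^ t) h c))"
    using sum_lessThan_shift_periodic[where \<phi> = "\<lambda>t. column_weight c ((T ^^ t) h c)" for c] per'
    by simp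
  also have "\<dots> = (\<Sum>t<n. weight ((T ^^ t) h))"
    unfolding weight_def by (rule sum.swap)
  finally show ?thesis .
qed

lemma orbit_weight_sum:
  assumes h: "is_height h" and per: "(T ^^ n) h = h"
    and K: "\<And>g g'. is_height g \<Longrightarrow> is_height g' \<Longrightarrow> promotes g g' \<Longrightarrow> weight g + weight g' = K"
  shows "2 * (\<Sum>t<n. weight ((T ^^ t) h)) = real n * K"
proof -
  let ?w = "\<lambda>t. weight (realign ((T ^^ t) h))"
  have "?w t + ?w (Suc t) = K" for t
    using K[OF is_height_realign is_height_realign realign_promotes]
      is_height_funpow_T[OF h, of t] is_height_T[OF is_height_funpow_T[OF h, of t]]
    by simp
  then have "(\<Sum>t<n. ?w t) + (\<Sum>t<n. ?w (t + 1)) = real n * K"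
    by (simp add: sum.distrib[symmetric])
  moreover have "(\<Sum>t<n. ?w (t + 1)) = (\<Sum>t<n. ?w t)"
    using sum_lessThan_shift_periodic[of ?w n 1] per by (simp add: funpow_add)
  ultimately show ?thesis
    using sum_weight_realign[OF per] by simp
qed

lemma homomesic_comotion:
  assumes K: "\<And>g g'. is_height g \<Longrightarrow> is_height g' \<Longrightarrow> promotes g g' \<Longrightarrow> weight g + weight g' = K"
  shows "homomesic (ideals shape) (comotion shape column a \<nu>) Rstat"
proof (rule homomesicI_periodic[OF finite_ideals[OF finite_shape] bij_betw_comotion])
  fix I n assume I: "I \<in> ideals shape" and per: "(comotion shape column a \<nu> ^^ n) I = I"
  obtain h where h: "is_height h" "I = ideal_of h"
    using I ideals_shape by auto
  have "(T ^^ n) h = h"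
    using per inj_onD[OF inj_on_ideal_of] is_height_funpow_T[OF h(1)] h
    by (simp add: funpow_comotion_ideal_of)
  then have "2 * (\<Sum>t<n. weight ((T ^^ t) h)) = real n * K"
    by (rule orbit_weight_sum[OF h(1) _ K])
  moreover have "(\<Sum>t<n. Rstat ((comotion shape column a \<nu> ^^ t) I)) = (\<Sum>t<n. weight ((T ^^ t) h))"
    using h by (simp add: funpow_comotion_ideal_of Rstat_ideal_of)
  ultimately show "(\<Sum>t<n. Rstat ((comotion shape column a \<nu> ^^ t) I)) = real n * (K / 2)"
    by simp
qed

end

section \<open>The square and the staircase\<close>

lemma comotion_cong:
  assumes "\<And>k. k \<in> {1..a} \<Longrightarrow> col (\<nu> k) = col' (\<nu> k)"
  shows "comotion P col a \<nu> = comotion P col' a \<nu>"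
  unfolding comotion_def using assms by (intro ext fold_cong) auto

lemma homomesic_comotion_rectangle:
  assumes "\<nu> permutes {1..a}"
  shows "homomesic (ideals (Qaa a)) (comotion (Qaa a) (colQ a) a \<nu>) Rstat"
proof -
  interpret skew_shape_comotion a "\<lambda>c. if c = 0 then a else 0" \<nu>
    by unfold_locales (use assms in auto)
  have "Qaa a = shape"
    by (auto simp: shape_def Qaa_def)
  moreover have "comotion shape (colQ a) a \<nu> = comotion shape column a \<nu>"
  proof (rule comotion_cong)
    fix k assume "k \<in> {1..a}"
    then have "\<nu> k \<noteq> 0"
      using \<nu>_in by fastforce
    then show "colQ a (\<nu> k) = column (\<nu> k)"
      by (simp add: colQ_def column_def)
  qed
  moreover have "\<And>c::nat. 0 < c \<Longrightarrow> (if c = 0 then a else 0) = 0"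
    by auto
  ultimately show ?thesis
    using homomesic_comotion[OF weight_promotes_rectangle] by simp
qed

lemma homomesic_comotion_staircase:
  assumes "\<nu> permutes {1..a}"
  shows "homomesic (ideals (Ua a)) (comotion (Ua a) (colU a) a \<nu>) Rstat"
proof -
  interpret skew_shape_comotion a "\<lambda>c. a - c" \<nu>
    by unfold_locales (use assms in auto)
  have "Ua a = shape"
    by (auto simp: shape_def Ua_def)
  moreover have "comotion shape (colU a) a \<nu> = comotion shape column a \<nu>"
  proof (rule comotion_cong)
    fix k assume "k \<in> {1..a}"
    then have "\<nu> k \<le> a"
      using \<nu>_in by fastforce
    then show "colU a (\<nu> k) = column (\<nu> k)"
      by (simp add: colU_def column_def Suc_diff_le)
  qed
  ultimately show ?thesis
    using homomesic_comotion[OF weight_promotes_staircase] by simp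
qed

theorem mainTheorem12:
  fixes a :: nat and \<nu> :: "nat \<Rightarrow> nat" and P :: "(nat \<times> nat) set"
    and col :: "nat \<Rightarrow> (nat \<times> nat) list"
  assumes "a \<ge> 1"
    and "\<nu> permutes {1..a}"
    and "(P = Qaa a \<and> col = colQ a) \<or> (P = Ua a \<and> col = colU a)"
  shows "homomesic (ideals P) (comotion P col a \<nu>) Rstat"
  using assms(3) homomesic_comotion_rectangle[OF assms(2)] homomesic_comotion_staircase[OF assms(2)]
  by auto

end
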